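(* Let $f:\mathbb{R}^n\to\mathbb{R}$ be convex, differentiable and bounded from below, with $\nabla f$ being $L$-Lipschitz continuous ($L>0$), let $\lambda>0$, and let $H(x)=f(x)+\lambda\|x\|_0$. Let $\{x_k\},\{y_k\}$ be generated by the VMEPIHT method described in the context. Then: (1) every cluster point of $\{x_k\}$ is a local minimizer of $H$; (2) if $x^*$ is a cluster point of $\{x_k\}$, then $H(x_k)\to H(x^* )$.
   Context: $\|x\|_0$ denotes the number of nonzero components of $x\in\mathbb{R}^n$. For $x\in\mathbb{R}^n$, $I(x):=\{i: x_i=0\}$. For an index set $I\subseteq\{1,\dots,n\}$, $C_I:=\{x\in\mathbb{R}^n: x_i=0 \text{ for all } i\in I\}$, and $P_C(x)=\arg\min_{z\in C}\frac12\|z-x\|^2$ is the Euclidean projection onto $C$. VMEPIHT method: fix parameters $\mu>0$, $\lambda>0$ and a starting point $y_0\in\mathbb{R}^n$. For $k=0,1,2,\dots$: choose $x_k\in\arg\min_{x\in\mathbb{R}^n}\ \lambda\|x\|_0+\frac{L}{2}\|x-y_k+\frac1L\nabla f(y_k)\|^2+\frac{\mu}{2}\|x-y_k\|^2$; then choose a symmetric positive definite matrix $H_k$ and a step length $\alpha_k\ge 0$, and set $y_{k+1}=P_{C_{I(x_k)}}(x_k-\alpha_kH_k\nabla f(x_k))$, where $\alpha_k$ is chosen so that $f(y_{k+1})\leq f(x_k)$. *)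

theory Defs
  imports "HOL-Analysis.Analysis"
begin

definition l0norm :: "real ^ 'n \<Rightarrow> nat" where
  "l0norm x = card {i. x $ i \<noteq> 0}"

definition zero_idx :: "real ^ 'n \<Rightarrow> 'n set" where
  "zero_idx x = {i. x $ i = 0}"

definition C_set :: "'n set \<Rightarrow> (real ^ 'n) set" where
  "C_set I = {x. \<forall>i\<in>I. x $ i = 0}"

definition is_proj :: "(real ^ 'n) set \<Rightarrow> real ^ 'n \<Rightarrow> real ^ 'n \<Rightarrow> bool" where
  "is_proj C x p \<longleftrightarrow> p \<in> C \<and> (\<forall>z\<in>C. (1/2) * (norm (p - x))\<^sup>2 \<le> (1/2) * (norm (z - x))\<^sup>2)"

definition sym_pos_def_mat :: "real ^ 'n ^ 'n \<Rightarrow> bool" where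
  "sym_pos_def_mat A \<longleftrightarrow> transpose A = A \<and> (\<forall>v. v \<noteq> 0 \<longrightarrow> v \<bullet> (A *v v) > 0)"

definition cluster_point :: "(nat \<Rightarrow> real ^ 'n) \<Rightarrow> real ^ 'n \<Rightarrow> bool" where
  "cluster_point x c \<longleftrightarrow> (\<exists>r. strict_mono r \<and> (x \<circ> r) \<longlonglongrightarrow> c)"

definition local_minimizer :: "(real ^ 'n \<Rightarrow> real) \<Rightarrow> real ^ 'n \<Rightarrow> bool" where
  "local_minimizer h c \<longleftrightarrow> (\<exists>e>0. \<forall>x\<in>ball c e. h c \<le> h x)"

end

theory Submission
  imports Defs
begin

text \<open>
  Writing the thresholding subproblem as an \<open>l\<^sub>0\<close>-proximal step of \<open>H\<close> at \<open>y\<^sub>k\<close> and using the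
  descent lemma gives \<open>H(x\<^sub>k) + \<mu>/2 \<parallel>x\<^sub>k - y\<^sub>k\<parallel>\<^sup>2 \<le> H(y\<^sub>k)\<close>; the projected step does not enlarge
  the support and does not increase \<open>f\<close>, so \<open>H(y\<^sub>k\<^sub>+\<^sub>1) \<le> H(x\<^sub>k)\<close>. Hence \<open>H(x\<^sub>k)\<close> and \<open>H(y\<^sub>k)\<close>
  have a common limit and \<open>x\<^sub>k - y\<^sub>k \<rightarrow> 0\<close>. A nonzero entry of \<open>x\<^sub>k\<close> is the corresponding entry
  of \<open>y\<^sub>k - \<nabla>f(y\<^sub>k)/(L+\<mu>)\<close> and has square at least \<open>2\<lambda>/(L+\<mu>)\<close>, so along a subsequence
  converging to \<open>c\<close> the support of \<open>x\<^sub>k\<close> is eventually that of \<open>c\<close>, \<open>\<nabla>f(c)\<close> vanishes on that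
  support, and \<open>H(x\<^sub>k) \<rightarrow> H(c)\<close>. By convexity, moving within the support of \<open>c\<close> cannot decrease
  \<open>f\<close>, while leaving it costs at least \<open>\<lambda>\<close>, more than the first-order gain near \<open>c\<close>; so \<open>c\<close> is
  a local minimizer of \<open>H\<close>.
\<close>

lemma has_real_derivative_along_line:
  fixes f :: "'a::real_inner \<Rightarrow> real"
  assumes "\<And>z. (f has_derivative (\<lambda>h. gradf z \<bullet> h)) (at z)"
  shows "((\<lambda>t. f (y + t *\<^sub>R d)) has_real_derivative (gradf (y + t *\<^sub>R d) \<bullet> d)) (at t)"
proof -
  have "((\<lambda>t. y + t *\<^sub>R d) has_derivative (\<lambda>h. h *\<^sub>R d)) (at t)"
    by (auto intro!: derivative_eq_intros)
  from has_derivative_compose[OF this assms]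
  show ?thesis
    unfolding has_field_derivative_def by (rule has_derivative_eq_rhs) (auto simp: fun_eq_iff)
qed

lemma descent_lemma:
  fixes f :: "'a::real_inner \<Rightarrow> real"
  assumes grad: "\<And>z. (f has_derivative (\<lambda>h. gradf z \<bullet> h)) (at z)"
    and Lip: "\<And>u v. norm (gradf u - gradf v) \<le> L * norm (u - v)"
  shows "f x \<le> f y + gradf y \<bullet> (x - y) + L / 2 * (norm (x - y))\<^sup>2"
proof -
  define d where "d = x - y"
  define \<psi> where "\<psi> t = f (y + t *\<^sub>R d) - t * (gradf y \<bullet> d) - L / 2 * t\<^sup>2 * (norm d)\<^sup>2" for t
  have D: "(\<psi> has_real_derivative (gradf (y + t *\<^sub>R d) \<bullet> d - gradf y \<bullet> d - L * t * (norm d)\<^sup>2)) (at t)"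
    for t
    unfolding \<psi>_def
    by (rule derivative_eq_intros has_real_derivative_along_line[OF grad] refl | simp)+
  have "gradf (y + t *\<^sub>R d) \<bullet> d - gradf y \<bullet> d \<le> L * t * (norm d)\<^sup>2" if "0 \<le> t" for t
  proof -
    have "gradf (y + t *\<^sub>R d) \<bullet> d - gradf y \<bullet> d \<le> norm (gradf (y + t *\<^sub>R d) - gradf y) * norm d"
      by (metis inner_diff_left norm_cauchy_schwarz)
    also have "\<dots> \<le> L * norm (t *\<^sub>R d) * norm d"
      using Lip[of "y + t *\<^sub>R d" y] by (intro mult_right_mono) auto
    finally show ?thesis using that by (simp add: power2_eq_square)
  qed
  with D have "\<psi> 1 \<le> \<psi> 0"
    by (intro DERIV_nonpos_imp_nonincreasing[of 0 1 \<psi>]) (auto intro!: exI)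
  then show ?thesis unfolding \<psi>_def d_def by simp
qed

lemma convex_on_gradient_inequality:
  fixes f :: "'a::real_inner \<Rightarrow> real"
  assumes conv: "convex_on UNIV f"
    and grad: "\<And>z. (f has_derivative (\<lambda>h. gradf z \<bullet> h)) (at z)"
  shows "f c + gradf c \<bullet> (z - c) \<le> f z"
proof -
  define \<phi> where "\<phi> t = f (c + t *\<^sub>R (z - c))" for t
  have "convex_on UNIV \<phi>"
    unfolding convex_on_alt
  proof (intro conjI ballI allI impI)
    fix a b u :: real assume u: "0 \<le> u \<and> u \<le> 1"
    have "c + (u *\<^sub>R a + (1 - u) *\<^sub>R b) *\<^sub>R (z - c)
        = u *\<^sub>R (c + a *\<^sub>R (z - c)) + (1 - u) *\<^sub>R (c + b *\<^sub>R (z - c))"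
      by (simp add: algebra_simps)
    then show "\<phi> (u *\<^sub>R a + (1 - u) *\<^sub>R b) \<le> u * \<phi> a + (1 - u) * \<phi> b"
      unfolding \<phi>_def using conv u unfolding convex_on_alt by auto
  qed simp
  moreover have "(\<phi> has_real_derivative (gradf c \<bullet> (z - c))) (at 0)"
    using has_real_derivative_along_line[OF grad, of c "z - c" 0] by (simp add: \<phi>_def[abs_def])
  ultimately have "gradf c \<bullet> (z - c) * (1 - 0) \<le> \<phi> 1 - \<phi> 0"
    by (intro convex_on_imp_above_tangent) auto
  then show ?thesis unfolding \<phi>_def by simp
qed

lemma isCont_if_Lipschitz:
  fixes g :: "'a::real_normed_vector \<Rightarrow> 'b::real_normed_vector"
  assumes "\<And>u v. norm (g u - g v) \<le> L * norm (u - v)"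
  shows "isCont g z"
  unfolding isCont_def
proof (rule LIM_zero_cancel, rule Lim_null_comparison)
  show "\<forall>\<^sub>F u in at z. norm (g u - g z) \<le> L * norm (u - z)"
    using assms by simp
  have "((\<lambda>u. L * norm (u - z)) \<longlongrightarrow> L * norm (z - z)) (at z)"
    by (intro tendsto_intros)
  then show "((\<lambda>u. L * norm (u - z)) \<longlongrightarrow> 0) (at z)"
    by simp
qed

lemma norm_sq_shift_expand:
  fixes a g :: "'a::real_inner"
  assumes "c > 0"
  shows "c / 2 * (norm (a + (1 / c) *\<^sub>R g))\<^sup>2 = c / 2 * (norm a)\<^sup>2 + g \<bullet> a + (norm g)\<^sup>2 / (2 * c)"
proof -
  have "(norm (a + (1 / c) *\<^sub>R g))\<^sup>2 = (norm a)\<^sup>2 + 2 / c * (g \<bullet> a) + (norm g)\<^sup>2 / c\<^sup>2"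
    unfolding power2_norm_eq_inner
    by (simp add: inner_add_left inner_add_right inner_commute power2_eq_square algebra_simps)
  then show ?thesis using assms by (simp add: field_simps power2_eq_square)
qed

lemma l0norm_mono:
  assumes "\<And>i. y $ i \<noteq> 0 \<Longrightarrow> x $ i \<noteq> 0"
  shows "l0norm y \<le> l0norm x"
  using assms unfolding l0norm_def by (intro card_mono) auto

lemma l0norm_proj_le:
  assumes "is_proj (C_set (zero_idx x)) v p"
  shows "l0norm p \<le> l0norm x"
  using assms by (intro l0norm_mono) (auto simp: is_proj_def C_set_def zero_idx_def)

lemma norm_sq_change_component:
  fixes u u' :: "real ^ 'n"
  assumes "\<And>j. j \<noteq> i \<Longrightarrow> u' $ j = u $ j"
  shows "(norm u')\<^sup>2 = (norm u)\<^sup>2 - (u $ i)\<^sup>2 + (u' $ i)\<^sup>2"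
proof -
  have split: "(norm w)\<^sup>2 = (w $ i)\<^sup>2 + (\<Sum>j\<in>UNIV - {i}. (w $ j)\<^sup>2)" for w :: "real ^ 'n"
    unfolding power2_norm_eq_inner inner_vec_def by (simp add: power2_eq_square sum.remove)
  have "(\<Sum>j\<in>UNIV - {i}. (u' $ j)\<^sup>2) = (\<Sum>j\<in>UNIV - {i}. (u $ j)\<^sup>2)"
    using assms by (intro sum.cong) auto
  then show ?thesis using split[of u] split[of u'] by simp
qed

lemma l0_prox_nonzero_component:
  fixes x w :: "real ^ 'n"
  assumes "c > 0" "lam > 0"
    and min: "\<And>z. lam * real (l0norm x) + c / 2 * (norm (x - w))\<^sup>2
                 \<le> lam * real (l0norm z) + c / 2 * (norm (z - w))\<^sup>2"
    and nz: "x $ i \<noteq> 0"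
  shows "x $ i = w $ i \<and> 2 * lam / c \<le> (x $ i)\<^sup>2"
proof -
  define z where "z v = (\<chi> j. if j = i then v else x $ j)" for v
  \<comment> \<open>\<open>z 0\<close> shrinks the support by one, \<open>z (w $ i)\<close> keeps it if \<open>w $ i \<noteq> 0\<close>.\<close>
  have norm_z: "(norm (z v - w))\<^sup>2 = (norm (x - w))\<^sup>2 - (x $ i - w $ i)\<^sup>2 + (v - w $ i)\<^sup>2" for v
    using norm_sq_change_component[of i "z v - w" "x - w"] by (simp add: z_def)
  have l0_z: "l0norm (z v) = l0norm x" if "v \<noteq> 0" for v
    unfolding l0norm_def z_def using that nz by (intro arg_cong[where f = card]) auto
  have "{j. z 0 $ j \<noteq> 0} = {j. x $ j \<noteq> 0} - {i}"
    by (auto simp: z_def)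
  moreover have "card {j. x $ j \<noteq> 0} > 0"
    using nz by (auto simp: card_gt_0_iff)
  ultimately have "real (l0norm (z 0)) = real (l0norm x) - 1"
    using nz by (simp add: l0norm_def card_Diff_singleton of_nat_diff)
  then have "lam * real (l0norm (z 0)) = lam * real (l0norm x) - lam"
    by (simp add: right_diff_distrib)
  then have drop: "lam \<le> c / 2 * ((w $ i)\<^sup>2 - (x $ i - w $ i)\<^sup>2)"
    using min[of "z 0"] norm_z[of 0] by (simp add: algebra_simps)
  have "x $ i = w $ i"
  proof (rule ccontr)
    assume "x $ i \<noteq> w $ i"
    then have pos: "0 < (x $ i - w $ i)\<^sup>2" by simp
    have "w $ i \<noteq> 0"
    proof
      assume "w $ i = 0"
      with drop have "lam \<le> - (c / 2 * (x $ i)\<^sup>2)" by simp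
      moreover have "0 \<le> c / 2 * (x $ i)\<^sup>2" using \<open>c > 0\<close> by simp
      ultimately show False using \<open>lam > 0\<close> by linarith
    qed
    then show False
      using min[of "z (w $ i)"] norm_z[of "w $ i"] l0_z pos \<open>c > 0\<close> by simp
  qed
  with drop \<open>c > 0\<close> show ?thesis by (simp add: field_simps)
qed

lemma step_quadratic_complete_square:
  fixes y g z :: "'a::real_inner"
  assumes "L > 0" "\<mu> > 0"
  shows "L / 2 * (norm (z - y + (1 / L) *\<^sub>R g))\<^sup>2 + \<mu> / 2 * (norm (z - y))\<^sup>2
       = (L + \<mu>) / 2 * (norm (z - (y - (1 / (L + \<mu>)) *\<^sub>R g)))\<^sup>2
         + ((norm g)\<^sup>2 / (2 * L) - (norm g)\<^sup>2 / (2 * (L + \<mu>)))"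
proof -
  have shift: "z - (y - (1 / (L + \<mu>)) *\<^sub>R g) = (z - y) + (1 / (L + \<mu>)) *\<^sub>R g"
    by simp
  have "(L + \<mu>) / 2 * (norm (z - (y - (1 / (L + \<mu>)) *\<^sub>R g)))\<^sup>2
      = (L + \<mu>) / 2 * (norm (z - y))\<^sup>2 + g \<bullet> (z - y) + (norm g)\<^sup>2 / (2 * (L + \<mu>))"
    unfolding shift using assms by (intro norm_sq_shift_expand) simp
  moreover have "L / 2 * (norm (z - y + (1 / L) *\<^sub>R g))\<^sup>2
      = L / 2 * (norm (z - y))\<^sup>2 + g \<bullet> (z - y) + (norm g)\<^sup>2 / (2 * L)"
    using norm_sq_shift_expand[of L "z - y" g] assms by simp
  ultimately show ?thesis by (simp add: field_simps)
qed

lemma iht_step_nonzero_component: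
  fixes x y g :: "real ^ 'n"
  assumes "L > 0" "\<mu> > 0" "lam > 0"
    and step: "\<And>z. lam * real (l0norm x) + L / 2 * (norm (x - y + (1 / L) *\<^sub>R g))\<^sup>2
                    + \<mu> / 2 * (norm (x - y))\<^sup>2
                  \<le> lam * real (l0norm z) + L / 2 * (norm (z - y + (1 / L) *\<^sub>R g))\<^sup>2
                    + \<mu> / 2 * (norm (z - y))\<^sup>2"
    and "x $ i \<noteq> 0"
  shows "x $ i = y $ i - g $ i / (L + \<mu>) \<and> 2 * lam / (L + \<mu>) \<le> (x $ i)\<^sup>2"
proof -
  have "lam * real (l0norm x) + (L + \<mu>) / 2 * (norm (x - (y - (1 / (L + \<mu>)) *\<^sub>R g)))\<^sup>2
      \<le> lam * real (l0norm z) + (L + \<mu>) / 2 * (norm (z - (y - (1 / (L + \<mu>)) *\<^sub>R g)))\<^sup>2" for z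
    using step[of z] step_quadratic_complete_square[OF \<open>L > 0\<close> \<open>\<mu> > 0\<close>, of _ y g]
    by (smt (verit))
  from l0_prox_nonzero_component[OF _ \<open>lam > 0\<close> this \<open>x $ i \<noteq> 0\<close>] assms(1,2)
  show ?thesis by auto
qed

lemma iht_step_sufficient_decrease:
  fixes f :: "real ^ 'n \<Rightarrow> real"
  assumes grad: "\<And>z. (f has_derivative (\<lambda>h. gradf z \<bullet> h)) (at z)"
    and Lip: "\<And>u v. norm (gradf u - gradf v) \<le> L * norm (u - v)"
    and "L > 0"
    and step: "lam * real (l0norm x) + L / 2 * (norm (x - y + (1 / L) *\<^sub>R gradf y))\<^sup>2
                 + \<mu> / 2 * (norm (x - y))\<^sup>2
               \<le> lam * real (l0norm y) + L / 2 * (norm (y - y + (1 / L) *\<^sub>R gradf y))\<^sup>2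
                 + \<mu> / 2 * (norm (y - y))\<^sup>2"
  shows "f x + lam * real (l0norm x) + \<mu> / 2 * (norm (x - y))\<^sup>2 \<le> f y + lam * real (l0norm y)"
proof -
  have "L / 2 * (norm (y - y + (1 / L) *\<^sub>R gradf y))\<^sup>2 = (norm (gradf y))\<^sup>2 / (2 * L)"
    using norm_sq_shift_expand[OF \<open>L > 0\<close>, of 0 "gradf y"] by simp
  moreover have "\<mu> / 2 * (norm (y - y))\<^sup>2 = 0"
    by simp
  ultimately show ?thesis
    using step descent_lemma[OF grad Lip, of x y] norm_sq_shift_expand[OF \<open>L > 0\<close>, of "x - y" "gradf y"]
    by linarith
qed

lemma interlaced_descent_tendsto:
  fixes a b :: "nat \<Rightarrow> real" and u :: "nat \<Rightarrow> 'a::real_normed_vector"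
  assumes "c > 0"
    and decrease: "\<And>k. b k + c * (norm (u k))\<^sup>2 \<le> a k"
    and next_le: "\<And>k. a (Suc k) \<le> b k"
    and bounded: "\<And>k. m \<le> a k"
  shows "\<exists>s. a \<longlonglongrightarrow> s \<and> b \<longlonglongrightarrow> s \<and> u \<longlonglongrightarrow> 0"
proof -
  have nonneg: "0 \<le> c * (norm (u k))\<^sup>2" for k
    using \<open>c > 0\<close> by simp
  have gap: "c * (norm (u k))\<^sup>2 \<le> a k - a (Suc k)" for k
    using decrease[of k] next_le[of k] by linarith
  have "decseq a"
    using gap nonneg by (intro decseq_SucI) (smt (verit))
  then obtain s where a: "a \<longlonglongrightarrow> s"
    using decseq_convergent bounded by blast
  have a_Suc: "(\<lambda>k. a (Suc k)) \<longlonglongrightarrow> s"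
    using a by (rule LIMSEQ_Suc)
  have "b \<longlonglongrightarrow> s"
  proof (rule tendsto_sandwich[OF _ _ a_Suc a])
    show "\<forall>\<^sub>F k in sequentially. a (Suc k) \<le> b k" using next_le by simp
    have "b k \<le> a k" for k
      using decrease[of k] nonneg[of k] by linarith
    then show "\<forall>\<^sub>F k in sequentially. b k \<le> a k" by simp
  qed
  have "(\<lambda>k. (norm (u k))\<^sup>2) \<longlonglongrightarrow> 0"
  proof (rule tendsto_sandwich[of "\<lambda>_. 0" _ _ "\<lambda>k. (a k - a (Suc k)) / c"])
    show "\<forall>\<^sub>F k in sequentially. (norm (u k))\<^sup>2 \<le> (a k - a (Suc k)) / c"
      using gap \<open>c > 0\<close> by (simp add: field_simps mult.commute)
    show "(\<lambda>k. (a k - a (Suc k)) / c) \<longlonglongrightarrow> 0"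
      using tendsto_divide[OF tendsto_diff[OF a a_Suc] tendsto_const[of c]] \<open>c > 0\<close> by simp
  qed auto
  then have "(\<lambda>k. sqrt ((norm (u k))\<^sup>2)) \<longlonglongrightarrow> sqrt 0"
    by (rule tendsto_real_sqrt)
  then have "u \<longlonglongrightarrow> 0"
    by (simp add: tendsto_norm_zero_iff)
  with a \<open>b \<longlonglongrightarrow> s\<close> show ?thesis by blast
qed

lemma eventually_support_eq:
  fixes u :: "nat \<Rightarrow> real ^ 'n"
  assumes "u \<longlonglongrightarrow> c" "\<delta> > 0"
    and gap: "\<And>j i. u j $ i \<noteq> 0 \<Longrightarrow> \<delta> \<le> (u j $ i)\<^sup>2"
  shows "\<forall>\<^sub>F j in sequentially. {i. u j $ i \<noteq> 0} = {i. c $ i \<noteq> 0}"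
proof -
  have "\<forall>\<^sub>F j in sequentially. u j $ i \<noteq> 0 \<longleftrightarrow> c $ i \<noteq> 0" for i
  proof (cases "c $ i = 0")
    case True
    have "(\<lambda>j. (u j $ i)\<^sup>2) \<longlonglongrightarrow> (c $ i)\<^sup>2"
      using assms(1) by (intro tendsto_intros)
    then have "\<forall>\<^sub>F j in sequentially. (u j $ i)\<^sup>2 < \<delta>"
      using True \<open>\<delta> > 0\<close> by (intro order_tendstoD(2)) auto
    then show ?thesis
    proof (rule eventually_mono)
      fix j assume "(u j $ i)\<^sup>2 < \<delta>"
      then show "u j $ i \<noteq> 0 \<longleftrightarrow> c $ i \<noteq> 0"
        using gap[of j i] True by fastforce
    qed
  next
    case False
    have "(\<lambda>j. u j $ i) \<longlonglongrightarrow> c $ i"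
      using assms(1) by (intro tendsto_intros)
    from tendsto_imp_eventually_ne[OF this False] show ?thesis
      by (rule eventually_mono) (simp add: False)
  qed
  then have "\<forall>\<^sub>F j in sequentially. \<forall>i. u j $ i \<noteq> 0 \<longleftrightarrow> c $ i \<noteq> 0"
    by (rule eventually_all_finite)
  then show ?thesis
    by (rule eventually_mono) auto
qed

lemma component_fixed_point_limit:
  fixes u v :: "nat \<Rightarrow> real ^ 'n" and g :: "real ^ 'n \<Rightarrow> real ^ 'n"
  assumes "u \<longlonglongrightarrow> c" "v \<longlonglongrightarrow> c" "isCont g c" "t \<noteq> 0"
    and "\<forall>\<^sub>F j in sequentially. u j $ i = v j $ i - g (v j) $ i / t"
  shows "g c $ i = 0"
proof -
  have "(\<lambda>j. v j $ i - g (v j) $ i / t) \<longlonglongrightarrow> c $ i - g c $ i / t"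
    using assms(2-4) by (intro tendsto_intros isCont_tendsto_compose[of c g])
  moreover have "(\<lambda>j. u j $ i) \<longlonglongrightarrow> c $ i"
    using assms(1) by (intro tendsto_intros)
  then have "(\<lambda>j. v j $ i - g (v j) $ i / t) \<longlonglongrightarrow> c $ i"
    using assms(5) by (rule Lim_transform_eventually)
  ultimately show ?thesis
    using LIMSEQ_unique assms(4) by fastforce
qed

lemma thresholded_limit_support_stationary:
  fixes u v :: "nat \<Rightarrow> real ^ 'n" and g :: "real ^ 'n \<Rightarrow> real ^ 'n"
  assumes "u \<longlonglongrightarrow> c" "v \<longlonglongrightarrow> c" "isCont g c" "t \<noteq> 0" "\<delta> > 0"
    and threshold: "\<And>j i. u j $ i \<noteq> 0 \<Longrightarrow> u j $ i = v j $ i - g (v j) $ i / t \<and> \<delta> \<le> (u j $ i)\<^sup>2"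
  shows "\<forall>\<^sub>F j in sequentially. {i. u j $ i \<noteq> 0} = {i. c $ i \<noteq> 0}"
    and "\<And>i. c $ i \<noteq> 0 \<Longrightarrow> g c $ i = 0"
proof -
  show support: "\<forall>\<^sub>F j in sequentially. {i. u j $ i \<noteq> 0} = {i. c $ i \<noteq> 0}"
    using eventually_support_eq[OF assms(1,5)] threshold by blast
  fix i assume "c $ i \<noteq> 0"
  from support have "\<forall>\<^sub>F j in sequentially. u j $ i = v j $ i - g (v j) $ i / t"
    by (rule eventually_mono) (use threshold \<open>c $ i \<noteq> 0\<close> in blast)
  then show "g c $ i = 0"
    by (rule component_fixed_point_limit[OF assms(1-4)])
qed

lemma l0_penalized_tendsto:
  fixes u :: "nat \<Rightarrow> real ^ 'n"
  assumes "u \<longlonglongrightarrow> c" "isCont f c"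
    and "\<forall>\<^sub>F j in sequentially. {i. u j $ i \<noteq> 0} = {i. c $ i \<noteq> 0}"
  shows "(\<lambda>j. f (u j) + lam * real (l0norm (u j))) \<longlonglongrightarrow> f c + lam * real (l0norm c)"
proof -
  have "(\<lambda>j. f (u j) + lam * real (l0norm c)) \<longlonglongrightarrow> f c + lam * real (l0norm c)"
    using assms(1,2) by (intro tendsto_intros isCont_tendsto_compose[of c f])
  moreover have "\<forall>\<^sub>F j in sequentially. f (u j) + lam * real (l0norm c) = f (u j) + lam * real (l0norm (u j))"
    using assms(3) by (rule eventually_mono) (simp add: l0norm_def)
  ultimately show ?thesis
    by (rule Lim_transform_eventually)
qed

lemma local_minimizerI_eventually:
  assumes "\<forall>\<^sub>F z in nhds c. h c \<le> h z"
  shows "local_minimizer h c"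
  using assms unfolding local_minimizer_def eventually_nhds_metric by (auto simp: dist_commute)

lemma inner_eq_zero_if_disjoint_supports:
  fixes g v :: "real ^ 'n"
  assumes "\<And>i. g $ i = 0 \<or> v $ i = 0"
  shows "g \<bullet> v = 0"
  unfolding inner_vec_def using assms by (intro sum.neutral) auto

lemma local_minimizer_l0_penalized:
  fixes f :: "real ^ 'n \<Rightarrow> real"
  assumes conv: "convex_on UNIV f"
    and grad: "\<And>z. (f has_derivative (\<lambda>h. gradf z \<bullet> h)) (at z)"
    and "lam > 0"
    and stationary: "\<And>i. c $ i \<noteq> 0 \<Longrightarrow> gradf c $ i = 0"
  shows "local_minimizer (\<lambda>z. f z + lam * real (l0norm z)) c"
proof (rule local_minimizerI_eventually)
  have "\<forall>\<^sub>F z in nhds c. c $ i \<noteq> 0 \<longrightarrow> z $ i \<noteq> 0" for i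
  proof (cases "c $ i = 0")
    case False
    have "((\<lambda>z. z $ i) \<longlongrightarrow> c $ i) (nhds c)"
      by (intro tendsto_intros filterlim_ident)
    from tendsto_imp_eventually_ne[OF this False] show ?thesis
      by (rule eventually_mono) simp
  qed simp
  then have "\<forall>\<^sub>F z in nhds c. \<forall>i. c $ i \<noteq> 0 \<longrightarrow> z $ i \<noteq> 0"
    by (rule eventually_all_finite)
  moreover have "((\<lambda>z. gradf c \<bullet> (z - c)) \<longlongrightarrow> gradf c \<bullet> (c - c)) (nhds c)"
    by (intro tendsto_intros filterlim_ident)
  from order_tendstoD(1)[OF this, of "- lam"]
  have "\<forall>\<^sub>F z in nhds c. - lam < gradf c \<bullet> (z - c)"
    using \<open>lam > 0\<close> by simp
  ultimately show "\<forall>\<^sub>F z in nhds c. f c + lam * real (l0norm c) \<le> f z + lam * real (l0norm z)"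
  proof eventually_elim
    case (elim z)
    have tangent: "f c + gradf c \<bullet> (z - c) \<le> f z"
      by (rule convex_on_gradient_inequality[OF conv grad])
    show ?case
    proof (cases "{i. z $ i \<noteq> 0} = {i. c $ i \<noteq> 0}")
      case True
      have "gradf c $ i = 0 \<or> (z - c) $ i = 0" for i
        using True stationary[of i] by (cases "c $ i = 0") (auto simp: set_eq_iff)
      then have "gradf c \<bullet> (z - c) = 0"
        by (rule inner_eq_zero_if_disjoint_supports)
      with True tangent show ?thesis by (simp add: l0norm_def)
    next
      case False
      with elim(1) have "{i. c $ i \<noteq> 0} \<subset> {i. z $ i \<noteq> 0}" by auto
      then have "l0norm c < l0norm z"
        unfolding l0norm_def by (intro psubset_card_mono) auto
      then have "lam * (real (l0norm c) + 1) \<le> lam * real (l0norm z)"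
        using \<open>lam > 0\<close> by (intro mult_left_mono) auto
      then have "lam * real (l0norm c) + lam \<le> lam * real (l0norm z)"
        by (simp add: distrib_left)
      with tangent elim(2) show ?thesis by linarith
    qed
  qed
qed

lemma vmepiht_energy_tendsto:
  fixes f :: "real ^ 'n \<Rightarrow> real" and x y w :: "nat \<Rightarrow> real ^ 'n"
  assumes grad: "\<And>z. (f has_derivative (\<lambda>h. gradf z \<bullet> h)) (at z)"
    and Lip: "\<And>u v. norm (gradf u - gradf v) \<le> L * norm (u - v)"
    and bdd: "\<And>z. m \<le> f z" and "L > 0" "lam > 0" "\<mu> > 0"
    and xstep: "\<And>k z. lam * real (l0norm (x k))
                 + L / 2 * (norm (x k - y k + (1 / L) *\<^sub>R gradf (y k)))\<^sup>2
                 + \<mu> / 2 * (norm (x k - y k))\<^sup>2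
               \<le> lam * real (l0norm z)
                 + L / 2 * (norm (z - y k + (1 / L) *\<^sub>R gradf (y k)))\<^sup>2
                 + \<mu> / 2 * (norm (z - y k))\<^sup>2"
    and ystep: "\<And>k. is_proj (C_set (zero_idx (x k))) (w k) (y (Suc k))"
    and descent: "\<And>k. f (y (Suc k)) \<le> f (x k)"
  obtains s where "(\<lambda>k. f (x k) + lam * real (l0norm (x k))) \<longlonglongrightarrow> s" and "(\<lambda>k. x k - y k) \<longlonglongrightarrow> 0"
proof -
  define F where "F z = f z + lam * real (l0norm z)" for z
  have bounded: "m \<le> F (y k)" for k
    using bdd[of "y k"] \<open>lam > 0\<close> unfolding F_def by (simp add: add_increasing2)
  have decrease: "F (x k) + \<mu> / 2 * (norm (x k - y k))\<^sup>2 \<le> F (y k)" for k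
    using iht_step_sufficient_decrease[OF grad Lip \<open>L > 0\<close> xstep[of k "y k"]] unfolding F_def by linarith
  have projection_step: "F (y (Suc k)) \<le> F (x k)" for k
    using l0norm_proj_le[OF ystep[of k]] descent[of k] \<open>lam > 0\<close> unfolding F_def
    by (simp add: add_mono mult_left_mono)
  obtain s where "(\<lambda>k. F (x k)) \<longlonglongrightarrow> s" and "(\<lambda>k. x k - y k) \<longlonglongrightarrow> 0"
    using interlaced_descent_tendsto[where a = "\<lambda>k. F (y k)" and b = "\<lambda>k. F (x k)",
        OF _ decrease projection_step bounded] \<open>\<mu> > 0\<close>
    by auto
  then show ?thesis
    unfolding F_def by (rule that)
qed

lemma vmepiht_cluster_point:
  fixes f :: "real ^ 'n \<Rightarrow> real" and x y :: "nat \<Rightarrow> real ^ 'n"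
  assumes conv: "convex_on UNIV f"
    and grad: "\<And>z. (f has_derivative (\<lambda>h. gradf z \<bullet> h)) (at z)"
    and Lip: "\<And>u v. norm (gradf u - gradf v) \<le> L * norm (u - v)"
    and "L > 0" "lam > 0" "\<mu> > 0"
    and xstep: "\<And>k z. lam * real (l0norm (x k))
                 + L / 2 * (norm (x k - y k + (1 / L) *\<^sub>R gradf (y k)))\<^sup>2
                 + \<mu> / 2 * (norm (x k - y k))\<^sup>2
               \<le> lam * real (l0norm z)
                 + L / 2 * (norm (z - y k + (1 / L) *\<^sub>R gradf (y k)))\<^sup>2
                 + \<mu> / 2 * (norm (z - y k))\<^sup>2"
    and gap: "(\<lambda>k. x k - y k) \<longlonglongrightarrow> 0"
    and "strict_mono r" and x_sub: "(\<lambda>j. x (r j)) \<longlonglongrightarrow> c"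
  shows "local_minimizer (\<lambda>z. f z + lam * real (l0norm z)) c"
    and "(\<lambda>j. f (x (r j)) + lam * real (l0norm (x (r j)))) \<longlonglongrightarrow> f c + lam * real (l0norm c)"
proof -
  have "(\<lambda>j. y (r j)) \<longlonglongrightarrow> c"
    using tendsto_diff[OF x_sub LIMSEQ_subseq_LIMSEQ[OF gap \<open>strict_mono r\<close>]] by (simp add: comp_def)
  moreover have "x k $ i = y k $ i - gradf (y k) $ i / (L + \<mu>) \<and> 2 * lam / (L + \<mu>) \<le> (x k $ i)\<^sup>2"
    if "x k $ i \<noteq> 0" for k i
    using iht_step_nonzero_component[OF \<open>L > 0\<close> \<open>\<mu> > 0\<close> \<open>lam > 0\<close> xstep that] .
  ultimately have support: "\<forall>\<^sub>F j in sequentially. {i. x (r j) $ i \<noteq> 0} = {i. c $ i \<noteq> 0}"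
    and stationary: "\<And>i. c $ i \<noteq> 0 \<Longrightarrow> gradf c $ i = 0"
    using thresholded_limit_support_stationary[OF x_sub _ isCont_if_Lipschitz[OF Lip],
        where t = "L + \<mu>" and \<delta> = "2 * lam / (L + \<mu>)"] assms(4-6) by auto
  show "local_minimizer (\<lambda>z. f z + lam * real (l0norm z)) c"
    using local_minimizer_l0_penalized[OF conv grad \<open>lam > 0\<close> stationary] .
  show "(\<lambda>j. f (x (r j)) + lam * real (l0norm (x (r j)))) \<longlonglongrightarrow> f c + lam * real (l0norm c)"
    using l0_penalized_tendsto[OF x_sub has_derivative_continuous[OF grad] support] .
qed

theorem theorem1:
  fixes f :: "real ^ 'n \<Rightarrow> real" and gradf :: "real ^ 'n \<Rightarrow> real ^ 'n"
    and L \<mu> lam :: real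
    and x y :: "nat \<Rightarrow> real ^ 'n"
    and Hm :: "nat \<Rightarrow> real ^ 'n ^ 'n" and \<alpha> :: "nat \<Rightarrow> real"
    and H :: "real ^ 'n \<Rightarrow> real"
  assumes conv: "convex_on UNIV f"
    and grad: "\<And>z. (f has_derivative (\<lambda>h. gradf z \<bullet> h)) (at z)"
    and bdd: "\<exists>m. \<forall>z. m \<le> f z"
    and Lpos: "L > 0"
    and Lip: "\<And>u v. norm (gradf u - gradf v) \<le> L * norm (u - v)"
    and lpos: "lam > 0" and mupos: "\<mu> > 0"
    and Hdef: "\<And>z. H z = f z + lam * real (l0norm z)"
    and xstep: "\<And>k z. lam * real (l0norm (x k))
                 + L / 2 * (norm (x k - y k + (1 / L) *\<^sub>R gradf (y k)))\<^sup>2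
                 + \<mu> / 2 * (norm (x k - y k))\<^sup>2
               \<le> lam * real (l0norm z)
                 + L / 2 * (norm (z - y k + (1 / L) *\<^sub>R gradf (y k)))\<^sup>2
                 + \<mu> / 2 * (norm (z - y k))\<^sup>2"
    and Hspd: "\<And>k. sym_pos_def_mat (Hm k)"
    and alpha_nn: "\<And>k. \<alpha> k \<ge> 0"
    and ystep: "\<And>k. is_proj (C_set (zero_idx (x k))) (x k - \<alpha> k *\<^sub>R (Hm k *v gradf (x k))) (y (Suc k))"
    and descent: "\<And>k. f (y (Suc k)) \<le> f (x k)"
  shows "(\<forall>c. cluster_point x c \<longrightarrow> local_minimizer H c)
       \<and> (\<forall>c. cluster_point x c \<longrightarrow> (\<lambda>k. H (x k)) \<longlonglongrightarrow> H c)"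
proof -
  have H_eq: "H = (\<lambda>z. f z + lam * real (l0norm z))"
    using Hdef by blast
  obtain m where "\<And>z. m \<le> f z"
    using bdd by blast
  obtain s where H_lim: "(\<lambda>k. f (x k) + lam * real (l0norm (x k))) \<longlonglongrightarrow> s"
    and gap: "(\<lambda>k. x k - y k) \<longlonglongrightarrow> 0"
    by (rule vmepiht_energy_tendsto[where x = x and y = y, OF grad Lip \<open>\<And>z. m \<le> f z\<close> Lpos lpos mupos xstep ystep descent])
  have "local_minimizer (\<lambda>z. f z + lam * real (l0norm z)) c
      \<and> (\<lambda>k. f (x k) + lam * real (l0norm (x k))) \<longlonglongrightarrow> f c + lam * real (l0norm c)"
    if "cluster_point x c" for c
  proof -
    obtain r where r: "strict_mono r" "(\<lambda>j. x (r j)) \<longlonglongrightarrow> c"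
      using \<open>cluster_point x c\<close> unfolding cluster_point_def comp_def by blast
    note limit = vmepiht_cluster_point[OF conv grad Lip Lpos lpos mupos xstep gap r]
    have "(\<lambda>j. f (x (r j)) + lam * real (l0norm (x (r j)))) \<longlonglongrightarrow> s"
      using LIMSEQ_subseq_LIMSEQ[OF H_lim \<open>strict_mono r\<close>] by (simp add: comp_def)
    with limit(2) have "s = f c + lam * real (l0norm c)"
      using LIMSEQ_unique by blast
    with H_lim limit(1) show ?thesis by simp
  qed
  then show ?thesis
    unfolding H_eq by blast
qed

end
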